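(* Let $(a_{ij})_{i,j=1}^s$, $(b_i)_{i=1}^s$ be the coefficients of a Runge–Kutta scheme with all $b_i\neq0$ which satisfies the classical order conditions up to order five and the simplifying assumptions $B(2)$, $C(2)$, $D(2)$. Then it also satisfies all the additional order conditions of order five: $$\sum_{k,l}\frac{a_{lk}c_kd_kd_l}{b_k}=\tfrac1{40},\ \sum_k\frac{c_k^2d_k^2}{b_k}=\tfrac1{30},\ \sum_l\frac{c_ld_l^3}{b_l^2}=\tfrac1{20},\ \sum_{k,l}\frac{a_{kl}d_k^2c_l}{b_k}=\tfrac1{60},\ \sum_m\frac{d_m^4}{b_m^3}=\tfrac15,$$ $$\sum_{i,j,k}b_ia_{ik}a_{ij}c_jc_k=\tfrac1{20},\ \sum_{j,k,l}a_{lk}a_{kj}c_jd_l=\tfrac1{120},\ \sum_{k,l}\frac{a_{lk}d_kc_ld_l}{b_k}=\tfrac7{120},\ \sum_{i,j,k}\frac{b_ib_j}{b_k}a_{jk}a_{ik}c_ic_j=\tfrac2{15},$$ $$\sum_{i,k}\frac{b_i}{b_k}a_{ik}c_ic_kd_k=\tfrac7{120},\ \sum_{i,l}\frac{b_i}{b_l^2}a_{il}c_id_l^2=\tfrac3{20},\ \sum_{k,l,m}\frac{a_{mk}a_{lk}d_ld_m}{b_k}=\tfrac1{20},\ \sum_{l,m}\frac{a_{ml}d_l^2d_m}{b_l^2}=\tfrac1{10},$$ $$\sum_{k,l,m}\frac{a_{ml}a_{lk}d_kd_m}{b_k}=\tfrac1{30},\ \sum_{i,k,l}\frac{b_i}{b_k}a_{lk}a_{ik}c_id_l=\tfrac3{40},\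 \sum_{i,k,l}\frac{b_i}{b_k}a_{ik}a_{il}d_kc_l=\tfrac3{40},$$ $$\sum_{i,l,m}\frac{b_i}{b_lb_m}a_{im}a_{il}d_ld_m=\tfrac2{15},\ \sum_{i,k}\frac{b_i}{b_k}a_{ik}c_i^2d_k=\tfrac3{20},\ \sum_{l,m}\frac{a_{lm}d_l^2d_m}{b_lb_m}=\tfrac1{15}.$$
   Context: All sums run from $1$ to $s$; $c_i=\sum_ja_{ij}$, $d_j=\sum_ib_ia_{ij}$. Simplifying assumptions: $B(p)$: $\sum_i b_ic_i^{q-1}=\frac1q$ for $q=1,\dots,p$; $C(\eta)$: $\sum_j a_{ij}c_j^{q-1}=\frac{c_i^q}{q}$ for all $i$ and $q=1,\dots,\eta$; $D(\zeta)$: $\sum_i b_ic_i^{q-1}a_{ij}=\frac{b_j}{q}(1-c_j^q)$ for all $j$ and $q=1,\dots,\zeta$. "Classical order conditions up to order five" are the standard Butcher rooted-tree conditions for an ODE $y'=f(y)$ up to order five. The additional conditions are those required (Bonnans–Laurent-Varin) for the discretization of an optimal control problem, with state scheme $(a_{ij},b_i)$ and adjoint scheme $\hat b_i=b_i$, $\hat a_{ij}=b_j-\frac{b_j}{b_i}a_{ji}$, to be of order five. *)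

theory Defs
  imports Complex_Main
begin

definition rk_c :: "nat \<Rightarrow> (nat \<Rightarrow> nat \<Rightarrow> real) \<Rightarrow> nat \<Rightarrow> real" where
  "rk_c s a i = (\<Sum>j\<in>{1..s}. a i j)"

definition rk_d :: "nat \<Rightarrow> (nat \<Rightarrow> nat \<Rightarrow> real) \<Rightarrow> (nat \<Rightarrow> real) \<Rightarrow> nat \<Rightarrow> real" where
  "rk_d s a b j = (\<Sum>i\<in>{1..s}. b i * a i j)"

definition simpl_B :: "nat \<Rightarrow> (nat \<Rightarrow> nat \<Rightarrow> real) \<Rightarrow> (nat \<Rightarrow> real) \<Rightarrow> nat \<Rightarrow> bool" where
  "simpl_B s a b p \<longleftrightarrow>
     (\<forall>q\<in>{1..p}. (\<Sum>i\<in>{1..s}. b i * rk_c s a i ^ (q - 1)) = 1 / real q)"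

definition simpl_C :: "nat \<Rightarrow> (nat \<Rightarrow> nat \<Rightarrow> real) \<Rightarrow> nat \<Rightarrow> bool" where
  "simpl_C s a eta \<longleftrightarrow>
     (\<forall>i\<in>{1..s}. \<forall>q\<in>{1..eta}.
        (\<Sum>j\<in>{1..s}. a i j * rk_c s a j ^ (q - 1)) = rk_c s a i ^ q / real q)"

definition simpl_D :: "nat \<Rightarrow> (nat \<Rightarrow> nat \<Rightarrow> real) \<Rightarrow> (nat \<Rightarrow> real) \<Rightarrow> nat \<Rightarrow> bool" where
  "simpl_D s a b zeta \<longleftrightarrow>
     (\<forall>j\<in>{1..s}. \<forall>q\<in>{1..zeta}.
        (\<Sum>i\<in>{1..s}. b i * rk_c s a i ^ (q - 1) * a i j) = b j / real q * (1 - rk_c s a j ^ q))"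

text \<open>The classical (Butcher rooted-tree) order conditions up to order five:
  the 17 conditions for the rooted trees with at most 5 vertices.\<close>

definition classical_order5 :: "nat \<Rightarrow> (nat \<Rightarrow> nat \<Rightarrow> real) \<Rightarrow> (nat \<Rightarrow> real) \<Rightarrow> bool" where
  "classical_order5 s a b \<longleftrightarrow>
   (let S = {1..s}; c = rk_c s a in
    \<comment> \<open>order 1\<close>
    (\<Sum>i\<in>S. b i) = 1 \<and>
    \<comment> \<open>order 2\<close>
    (\<Sum>i\<in>S. b i * c i) = 1/2 \<and>
    \<comment> \<open>order 3\<close>
    (\<Sum>i\<in>S. b i * c i ^ 2) = 1/3 \<and>
    (\<Sum>i\<in>S. \<Sum>j\<in>S. b i * a i j * c j) = 1/6 \<and>
    \<comment> \<open>order 4\<close>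
    (\<Sum>i\<in>S. b i * c i ^ 3) = 1/4 \<and>
    (\<Sum>i\<in>S. \<Sum>j\<in>S. b i * c i * a i j * c j) = 1/8 \<and>
    (\<Sum>i\<in>S. \<Sum>j\<in>S. b i * a i j * c j ^ 2) = 1/12 \<and>
    (\<Sum>i\<in>S. \<Sum>j\<in>S. \<Sum>k\<in>S. b i * a i j * a j k * c k) = 1/24 \<and>
    \<comment> \<open>order 5\<close>
    (\<Sum>i\<in>S. b i * c i ^ 4) = 1/5 \<and>
    (\<Sum>i\<in>S. \<Sum>j\<in>S. b i * c i ^ 2 * a i j * c j) = 1/10 \<and>
    (\<Sum>i\<in>S. \<Sum>j\<in>S. \<Sum>k\<in>S. b i * a i j * c j * a i k * c k) = 1/20 \<and>
    (\<Sum>i\<in>S. \<Sum>j\<in>S. b i * c i * a i j * c j ^ 2) = 1/15 \<and>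
    (\<Sum>i\<in>S. \<Sum>j\<in>S. \<Sum>k\<in>S. b i * c i * a i j * a j k * c k) = 1/30 \<and>
    (\<Sum>i\<in>S. \<Sum>j\<in>S. b i * a i j * c j ^ 3) = 1/20 \<and>
    (\<Sum>i\<in>S. \<Sum>j\<in>S. \<Sum>k\<in>S. b i * a i j * c j * a j k * c k) = 1/40 \<and>
    (\<Sum>i\<in>S. \<Sum>j\<in>S. \<Sum>k\<in>S. b i * a i j * a j k * c k ^ 2) = 1/60 \<and>
    (\<Sum>i\<in>S. \<Sum>j\<in>S. \<Sum>k\<in>S. \<Sum>l\<in>S. b i * a i j * a j k * a k l * c l) = 1/120)"

end

theory Submission
  imports Defs
begin

text \<open>By $D(1)$, $d_k = b_k(1 - c_k)$. Every inner sum over $a$ in the conditions is then a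
  polynomial in $c$: $C(2)$ evaluates $\sum_j a_{kj} c_j$, $D(2)$ evaluates $\sum_i b_i c_i a_{ik}$,
  and together they give $\sum_l a_{lk} d_l = b_k (1 - c_k)^2 / 2$ and
  $\sum_k a_{lk} d_k / b_k = c_l - c_l^2 / 2$. So each condition becomes $\sum_k b_k\, p(c_k)$ with
  $\deg p \le 4$, which the bushy-tree conditions $\sum_k b_k c_k^q = 1/(q+1)$, $q \le 4$, among
  the classical ones evaluate to $\int_0^1 p$.\<close>

locale rk_B5_C2_D2 =
  fixes S :: "nat set" and a :: "nat \<Rightarrow> nat \<Rightarrow> real" and b c d :: "nat \<Rightarrow> real"
  assumes weights_nonzero: "k \<in> S \<Longrightarrow> b k \<noteq> 0"
    and B5: "q \<le> 4 \<Longrightarrow> (\<Sum>k\<in>S. b k * c k ^ q) = 1 / real (Suc q)"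
    and C1: "k \<in> S \<Longrightarrow> (\<Sum>j\<in>S. a k j) = c k"
    and C2: "k \<in> S \<Longrightarrow> (\<Sum>j\<in>S. a k j * c j) = c k ^ 2 / 2"
    and D1: "k \<in> S \<Longrightarrow> (\<Sum>i\<in>S. b i * a i k) = b k * (1 - c k)"
    and D2: "k \<in> S \<Longrightarrow> (\<Sum>i\<in>S. b i * c i * a i k) = b k * (1 - c k ^ 2) / 2"
    and d_eq: "k \<in> S \<Longrightarrow> d k = b k * (1 - c k)"
begin

lemma quadrature_quartic:
  assumes "\<And>k. k \<in> S \<Longrightarrow> f k = b k * (x0 + x1 * c k + x2 * c k ^ 2 + x3 * c k ^ 3 + x4 * c k ^ 4)"
    and "x0 + x1 / 2 + x2 / 3 + x3 / 4 + x4 / 5 = v"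
  shows "sum f S = v"
proof -
  have moments: "(\<Sum>k\<in>S. b k) = 1" "(\<Sum>k\<in>S. b k * c k) = 1 / 2" "(\<Sum>k\<in>S. b k * c k ^ 2) = 1 / 3"
    "(\<Sum>k\<in>S. b k * c k ^ 3) = 1 / 4" "(\<Sum>k\<in>S. b k * c k ^ 4) = 1 / 5"
    using B5[of 0] B5[of 1] B5[of 2] B5[of 3] B5[of 4]
    by simp_all
  have "sum f S = x0 * (\<Sum>k\<in>S. b k) + x1 * (\<Sum>k\<in>S. b k * c k) + x2 * (\<Sum>k\<in>S. b k * c k ^ 2)
      + x3 * (\<Sum>k\<in>S. b k * c k ^ 3) + x4 * (\<Sum>k\<in>S. b k * c k ^ 4)"
    using assms(1) by (simp add: sum_distrib_left sum.distrib[symmetric] algebra_simps)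
  then show ?thesis
    using assms(2) by (simp only: moments)
qed

lemma col_sum_d: "k \<in> S \<Longrightarrow> (\<Sum>l\<in>S. a l k * d l) = b k * (1 - c k) ^ 2 / 2"
proof -
  assume k: "k \<in> S"
  have "(\<Sum>l\<in>S. a l k * d l) = (\<Sum>l\<in>S. b l * a l k) - (\<Sum>l\<in>S. b l * c l * a l k)"
    by (simp add: d_eq algebra_simps flip: sum_subtractf cong: sum.cong)
  also have "\<dots> = b k * (1 - c k) ^ 2 / 2"
    using D1[OF k] D2[OF k] by (simp add: power2_eq_square algebra_simps)
  finally show ?thesis .
qed

lemma row_sum_d_div_b: "l \<in> S \<Longrightarrow> (\<Sum>k\<in>S. a l k * d k / b k) = c l - c l ^ 2 / 2"
proof -
  assume l: "l \<in> S"
  have "(\<Sum>k\<in>S. a l k * d k / b k) = (\<Sum>k\<in>S. a l k) - (\<Sum>k\<in>S. a l k * c k)"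
    unfolding sum_subtractf[symmetric]
    by (rule sum.cong) (simp_all add: d_eq weights_nonzero field_simps)
  also have "\<dots> = c l - c l ^ 2 / 2"
    using l by (simp add: C1 C2)
  finally show ?thesis .
qed

lemmas inner_sums = C2 D2 col_sum_d row_sum_d_div_b
  \<comment> \<open>to be used before unfolding \<open>d_eq\<close>, which would destroy their left-hand sides\<close>

lemma additional_condition_1:
  "(\<Sum>k\<in>S. \<Sum>l\<in>S. a l k * c k * d k * d l / b k) = 1/40" (is "?sum = _")
proof -
  have "?sum = (\<Sum>k\<in>S. c k * d k / b k * (\<Sum>l\<in>S. a l k * d l))"
    by (simp add: sum_distrib_left sum_distrib_right sum_divide_distrib mult_ac)
  also have "\<dots> = 1/40"
    by (rule quadrature_quartic[of _ "0" "1/2" "-3/2" "3/2" "-1/2"];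
      (simp only: inner_sums)?;
      simp add: d_eq weights_nonzero field_simps eval_nat_numeral)
  finally show ?thesis .
qed

lemma additional_condition_2:
  "(\<Sum>k\<in>S. c k ^ 2 * d k ^ 2 / b k) = 1/30"
  by (rule quadrature_quartic[of _ "0" "0" "1" "-2" "1"])
    (simp_all add: d_eq weights_nonzero field_simps eval_nat_numeral)

lemma additional_condition_3:
  "(\<Sum>l\<in>S. c l * d l ^ 3 / b l ^ 2) = 1/20"
  by (rule quadrature_quartic[of _ "0" "1" "-3" "3" "-1"])
    (simp_all add: d_eq weights_nonzero field_simps eval_nat_numeral)

lemma additional_condition_4:
  "(\<Sum>k\<in>S. \<Sum>l\<in>S. a k l * d k ^ 2 * c l / b k) = 1/60" (is "?sum = _")
proof -
  have "?sum = (\<Sum>k\<in>S. d k ^ 2 / b k * (\<Sum>l\<in>S. a k l * c l))"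
    by (simp add: sum_distrib_left sum_distrib_right sum_divide_distrib mult_ac)
  also have "\<dots> = 1/60"
    by (rule quadrature_quartic[of _ "0" "0" "1/2" "-1" "1/2"];
      (simp only: inner_sums)?;
      simp add: d_eq weights_nonzero field_simps eval_nat_numeral)
  finally show ?thesis .
qed

lemma additional_condition_5:
  "(\<Sum>m\<in>S. d m ^ 4 / b m ^ 3) = 1/5"
  by (rule quadrature_quartic[of _ "1" "-4" "6" "-4" "1"])
    (simp_all add: d_eq weights_nonzero field_simps eval_nat_numeral)

lemma additional_condition_6:
  "(\<Sum>i\<in>S. \<Sum>j\<in>S. \<Sum>k\<in>S. b i * a i k * a i j * c j * c k) = 1/20" (is "?sum = _")
proof -
  have "?sum = (\<Sum>i\<in>S. b i * (\<Sum>j\<in>S. a i j * c j) * (\<Sum>k\<in>S. a i k * c k))"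
    by (simp add: sum_distrib_left sum_distrib_right sum_divide_distrib mult_ac)
  also have "\<dots> = 1/20"
    by (rule quadrature_quartic[of _ "0" "0" "0" "0" "1/4"];
      (simp only: inner_sums)?;
      simp add: d_eq weights_nonzero field_simps eval_nat_numeral)
  finally show ?thesis .
qed

lemma additional_condition_7:
  "(\<Sum>j\<in>S. \<Sum>k\<in>S. \<Sum>l\<in>S. a l k * a k j * c j * d l) = 1/120" (is "?sum = _")
proof -
  have "?sum = (\<Sum>k\<in>S. (\<Sum>l\<in>S. a l k * d l) * (\<Sum>j\<in>S. a k j * c j))"
    by (subst (2) sum.swap)
      (simp add: sum_distrib_left sum_distrib_right mult_ac; rule sum.cong[OF refl sum.swap])
  also have "\<dots> = 1/120"
    by (rule quadrature_quartic[of _ "0" "0" "1/4" "-1/2" "1/4"];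
      (simp only: inner_sums)?;
      simp add: d_eq weights_nonzero field_simps eval_nat_numeral)
  finally show ?thesis .
qed

lemma additional_condition_8:
  "(\<Sum>k\<in>S. \<Sum>l\<in>S. a l k * d k * c l * d l / b k) = 7/120" (is "?sum = _")
proof -
  have "?sum = (\<Sum>l\<in>S. c l * d l * (\<Sum>k\<in>S. a l k * d k / b k))"
    by (subst sum.swap) (simp add: sum_distrib_left sum_distrib_right sum_divide_distrib mult_ac)
  also have "\<dots> = 7/120"
    by (rule quadrature_quartic[of _ "0" "0" "1" "-3/2" "1/2"];
      (simp only: inner_sums)?;
      simp add: d_eq weights_nonzero field_simps eval_nat_numeral)
  finally show ?thesis .
qed

lemma additional_condition_9:
  "(\<Sum>i\<in>S. \<Sum>j\<in>S. \<Sum>k\<in>S. b i * b j / b k * a j k * a i k * c i * c j) = 2/15" (is "?sum = _")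
proof -
  have "?sum = (\<Sum>k\<in>S. (\<Sum>i\<in>S. b i * c i * a i k) * (\<Sum>j\<in>S. b j * c j * a j k) / b k)"
    by (subst sum.swap, subst (2) sum.swap)
      (simp add: sum_distrib_left sum_distrib_right sum_divide_distrib mult_ac)
  also have "\<dots> = 2/15"
    by (rule quadrature_quartic[of _ "1/4" "0" "-1/2" "0" "1/4"];
      (simp only: inner_sums)?;
      simp add: d_eq weights_nonzero field_simps eval_nat_numeral)
  finally show ?thesis .
qed

lemma additional_condition_10:
  "(\<Sum>i\<in>S. \<Sum>k\<in>S. b i / b k * a i k * c i * c k * d k) = 7/120" (is "?sum = _")
proof -
  have "?sum = (\<Sum>k\<in>S. c k * d k / b k * (\<Sum>i\<in>S. b i * c i * a i k))"
    by (subst sum.swap) (simp add: sum_distrib_left sum_distrib_right sum_divide_distrib mult_ac)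
  also have "\<dots> = 7/120"
    by (rule quadrature_quartic[of _ "0" "1/2" "-1/2" "-1/2" "1/2"];
      (simp only: inner_sums)?;
      simp add: d_eq weights_nonzero field_simps eval_nat_numeral)
  finally show ?thesis .
qed

lemma additional_condition_11:
  "(\<Sum>i\<in>S. \<Sum>l\<in>S. b i / b l ^ 2 * a i l * c i * d l ^ 2) = 3/20" (is "?sum = _")
proof -
  have "?sum = (\<Sum>l\<in>S. d l ^ 2 / b l ^ 2 * (\<Sum>i\<in>S. b i * c i * a i l))"
    by (subst sum.swap) (simp add: sum_distrib_left sum_distrib_right sum_divide_distrib mult_ac)
  also have "\<dots> = 3/20"
    by (rule quadrature_quartic[of _ "1/2" "-1" "0" "1" "-1/2"];
      (simp only: inner_sums)?;
      simp add: d_eq weights_nonzero field_simps eval_nat_numeral)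
  finally show ?thesis .
qed

lemma additional_condition_12:
  "(\<Sum>k\<in>S. \<Sum>l\<in>S. \<Sum>m\<in>S. a m k * a l k * d l * d m / b k) = 1/20" (is "?sum = _")
proof -
  have "?sum = (\<Sum>k\<in>S. (\<Sum>l\<in>S. a l k * d l) * (\<Sum>m\<in>S. a m k * d m) / b k)"
    by (simp add: sum_distrib_left sum_distrib_right sum_divide_distrib mult_ac)
  also have "\<dots> = 1/20"
    by (rule quadrature_quartic[of _ "1/4" "-1" "3/2" "-1" "1/4"];
      (simp only: inner_sums)?;
      simp add: d_eq weights_nonzero field_simps eval_nat_numeral)
  finally show ?thesis .
qed

lemma additional_condition_13:
  "(\<Sum>l\<in>S. \<Sum>m\<in>S. a m l * d l ^ 2 * d m / b l ^ 2) = 1/10" (is "?sum = _")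
proof -
  have "?sum = (\<Sum>l\<in>S. d l ^ 2 / b l ^ 2 * (\<Sum>m\<in>S. a m l * d m))"
    by (simp add: sum_distrib_left sum_distrib_right sum_divide_distrib mult_ac)
  also have "\<dots> = 1/10"
    by (rule quadrature_quartic[of _ "1/2" "-2" "3" "-2" "1/2"];
      (simp only: inner_sums)?;
      simp add: d_eq weights_nonzero field_simps eval_nat_numeral)
  finally show ?thesis .
qed

lemma additional_condition_14:
  "(\<Sum>k\<in>S. \<Sum>l\<in>S. \<Sum>m\<in>S. a m l * a l k * d k * d m / b k) = 1/30" (is "?sum = _")
proof -
  have "?sum = (\<Sum>l\<in>S. (\<Sum>k\<in>S. a l k * d k / b k) * (\<Sum>m\<in>S. a m l * d m))"
    by (subst sum.swap) (simp add: sum_distrib_left sum_distrib_right sum_divide_distrib mult_ac)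
  also have "\<dots> = 1/30"
    by (rule quadrature_quartic[of _ "0" "1/2" "-5/4" "1" "-1/4"];
      (simp only: inner_sums)?;
      simp add: d_eq weights_nonzero field_simps eval_nat_numeral)
  finally show ?thesis .
qed

lemma additional_condition_15:
  "(\<Sum>i\<in>S. \<Sum>k\<in>S. \<Sum>l\<in>S. b i / b k * a l k * a i k * c i * d l) = 3/40" (is "?sum = _")
proof -
  have "?sum = (\<Sum>k\<in>S. (\<Sum>i\<in>S. b i * c i * a i k) * (\<Sum>l\<in>S. a l k * d l) / b k)"
    by (subst sum.swap) (simp add: sum_distrib_left sum_distrib_right sum_divide_distrib mult_ac)
  also have "\<dots> = 3/40"
    by (rule quadrature_quartic[of _ "1/4" "-1/2" "0" "1/2" "-1/4"];
      (simp only: inner_sums)?;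
      simp add: d_eq weights_nonzero field_simps eval_nat_numeral)
  finally show ?thesis .
qed

lemma additional_condition_16:
  "(\<Sum>i\<in>S. \<Sum>k\<in>S. \<Sum>l\<in>S. b i / b k * a i k * a i l * d k * c l) = 3/40" (is "?sum = _")
proof -
  have "?sum = (\<Sum>i\<in>S. b i * (\<Sum>k\<in>S. a i k * d k / b k) * (\<Sum>l\<in>S. a i l * c l))"
    by (simp add: sum_distrib_left sum_distrib_right sum_divide_distrib mult_ac)
  also have "\<dots> = 3/40"
    by (rule quadrature_quartic[of _ "0" "0" "0" "1/2" "-1/4"];
      (simp only: inner_sums)?;
      simp add: d_eq weights_nonzero field_simps eval_nat_numeral)
  finally show ?thesis .
qed

lemma additional_condition_17:
  "(\<Sum>i\<in>S. \<Sum>l\<in>S. \<Sum>m\<in>S. b i / (b l * b m) * a i m * a i l * d l * d m) = 2/15" (is "?sum = _")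
proof -
  have "?sum = (\<Sum>i\<in>S. b i * (\<Sum>l\<in>S. a i l * d l / b l) * (\<Sum>m\<in>S. a i m * d m / b m))"
    by (simp add: sum_distrib_left sum_distrib_right sum_divide_distrib mult_ac)
  also have "\<dots> = 2/15"
    by (rule quadrature_quartic[of _ "0" "0" "1" "-1" "1/4"];
      (simp only: inner_sums)?;
      simp add: d_eq weights_nonzero field_simps eval_nat_numeral)
  finally show ?thesis .
qed

lemma additional_condition_18:
  "(\<Sum>i\<in>S. \<Sum>k\<in>S. b i / b k * a i k * c i ^ 2 * d k) = 3/20" (is "?sum = _")
proof -
  have "?sum = (\<Sum>i\<in>S. b i * c i ^ 2 * (\<Sum>k\<in>S. a i k * d k / b k))"
    by (simp add: sum_distrib_left sum_distrib_right sum_divide_distrib mult_ac)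
  also have "\<dots> = 3/20"
    by (rule quadrature_quartic[of _ "0" "0" "0" "1" "-1/2"];
      (simp only: inner_sums)?;
      simp add: d_eq weights_nonzero field_simps eval_nat_numeral)
  finally show ?thesis .
qed

lemma additional_condition_19:
  "(\<Sum>l\<in>S. \<Sum>m\<in>S. a l m * d l ^ 2 * d m / (b l * b m)) = 1/15" (is "?sum = _")
proof -
  have "?sum = (\<Sum>l\<in>S. d l ^ 2 / b l * (\<Sum>m\<in>S. a l m * d m / b m))"
    by (simp add: sum_distrib_left sum_distrib_right sum_divide_distrib mult_ac)
  also have "\<dots> = 1/15"
    by (rule quadrature_quartic[of _ "0" "1" "-5/2" "2" "-1/2"];
      (simp only: inner_sums)?;
      simp add: d_eq weights_nonzero field_simps eval_nat_numeral)
  finally show ?thesis .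
qed

end

lemma classical_order5_quadrature:
  assumes "classical_order5 s a b" and "q \<le> 4"
  shows "(\<Sum>k\<in>{1..s}. b k * rk_c s a k ^ q) = 1 / real (Suc q)"
proof -
  have "q \<in> {0, 1, 2, 3, 4}"
    using assms(2) by auto
  then show ?thesis
    using assms(1) unfolding classical_order5_def Let_def by auto
qed

lemma simpl_C_2:
  assumes "simpl_C s a 2" and "k \<in> {1..s}"
  shows "(\<Sum>j\<in>{1..s}. a k j * rk_c s a j) = rk_c s a k ^ 2 / 2"
  using bspec[OF bspec[OF assms(1)[unfolded simpl_C_def] assms(2)], of 2] by simp

lemma simpl_D_1:
  assumes "simpl_D s a b 2" and "k \<in> {1..s}"
  shows "(\<Sum>i\<in>{1..s}. b i * a i k) = b k * (1 - rk_c s a k)"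
  using bspec[OF bspec[OF assms(1)[unfolded simpl_D_def] assms(2)], of 1] by simp

lemma simpl_D_2:
  assumes "simpl_D s a b 2" and "k \<in> {1..s}"
  shows "(\<Sum>i\<in>{1..s}. b i * rk_c s a i * a i k) = b k * (1 - rk_c s a k ^ 2) / 2"
  using bspec[OF bspec[OF assms(1)[unfolded simpl_D_def] assms(2)], of 2] by simp

lemma rk_B5_C2_D2_if_order5:
  assumes "\<forall>i\<in>{1..s}. b i \<noteq> 0" and "classical_order5 s a b"
    and "simpl_C s a 2" and "simpl_D s a b 2"
  shows "rk_B5_C2_D2 {1..s} a b (rk_c s a) (rk_d s a b)"
proof
  show "rk_d s a b k = b k * (1 - rk_c s a k)" if "k \<in> {1..s}" for k
    using simpl_D_1[OF assms(4) that] by (simp add: rk_d_def)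
  show "(\<Sum>j\<in>{1..s}. a k j) = rk_c s a k" for k
    by (simp add: rk_c_def)
qed (use assms classical_order5_quadrature simpl_C_2 simpl_D_1 simpl_D_2 in blast)+

theorem mainTheorem4:
  fixes s :: nat and a :: "nat \<Rightarrow> nat \<Rightarrow> real" and b :: "nat \<Rightarrow> real"
  assumes bnz: "\<forall>i\<in>{1..s}. b i \<noteq> 0"
    and classical: "classical_order5 s a b"
    and B2: "simpl_B s a b 2"
    and C2: "simpl_C s a 2"
    and D2: "simpl_D s a b 2"
  defines "S \<equiv> {1..s}" and "c \<equiv> rk_c s a" and "d \<equiv> rk_d s a b"
  shows
    "(\<Sum>k\<in>S. \<Sum>l\<in>S. a l k * c k * d k * d l / b k) = 1/40 \<and>
     (\<Sum>k\<in>S. c k ^ 2 * d k ^ 2 / b k) = 1/30 \<and>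
     (\<Sum>l\<in>S. c l * d l ^ 3 / b l ^ 2) = 1/20 \<and>
     (\<Sum>k\<in>S. \<Sum>l\<in>S. a k l * d k ^ 2 * c l / b k) = 1/60 \<and>
     (\<Sum>m\<in>S. d m ^ 4 / b m ^ 3) = 1/5 \<and>
     (\<Sum>i\<in>S. \<Sum>j\<in>S. \<Sum>k\<in>S. b i * a i k * a i j * c j * c k) = 1/20 \<and>
     (\<Sum>j\<in>S. \<Sum>k\<in>S. \<Sum>l\<in>S. a l k * a k j * c j * d l) = 1/120 \<and>
     (\<Sum>k\<in>S. \<Sum>l\<in>S. a l k * d k * c l * d l / b k) = 7/120 \<and>
     (\<Sum>i\<in>S. \<Sum>j\<in>S. \<Sum>k\<in>S. b i * b j / b k * a j k * a i k * c i * c j) = 2/15 \<and>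
     (\<Sum>i\<in>S. \<Sum>k\<in>S. b i / b k * a i k * c i * c k * d k) = 7/120 \<and>
     (\<Sum>i\<in>S. \<Sum>l\<in>S. b i / b l ^ 2 * a i l * c i * d l ^ 2) = 3/20 \<and>
     (\<Sum>k\<in>S. \<Sum>l\<in>S. \<Sum>m\<in>S. a m k * a l k * d l * d m / b k) = 1/20 \<and>
     (\<Sum>l\<in>S. \<Sum>m\<in>S. a m l * d l ^ 2 * d m / b l ^ 2) = 1/10 \<and>
     (\<Sum>k\<in>S. \<Sum>l\<in>S. \<Sum>m\<in>S. a m l * a l k * d k * d m / b k) = 1/30 \<and>
     (\<Sum>i\<in>S. \<Sum>k\<in>S. \<Sum>l\<in>S. b i / b k * a l k * a i k * c i * d l) = 3/40 \<and>
     (\<Sum>i\<in>S. \<Sum>k\<in>S. \<Sum>l\<in>S. b i / b k * a i k * a i l * d k * c l) = 3/40 \<and>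
     (\<Sum>i\<in>S. \<Sum>l\<in>S. \<Sum>m\<in>S. b i / (b l * b m) * a i m * a i l * d l * d m) = 2/15 \<and>
     (\<Sum>i\<in>S. \<Sum>k\<in>S. b i / b k * a i k * c i ^ 2 * d k) = 3/20 \<and>
     (\<Sum>l\<in>S. \<Sum>m\<in>S. a l m * d l ^ 2 * d m / (b l * b m)) = 1/15"
proof -
  interpret rk_B5_C2_D2 S a b c d
    unfolding S_def c_def d_def using rk_B5_C2_D2_if_order5 bnz classical C2 D2 .
  show ?thesis
    by (intro conjI; rule additional_condition_1 additional_condition_2 additional_condition_3
        additional_condition_4 additional_condition_5 additional_condition_6 additional_condition_7
        additional_condition_8 additional_condition_9 additional_condition_10 additional_condition_11
        additional_condition_12 additional_condition_13 additional_condition_14 additional_condition_15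
        additional_condition_16 additional_condition_17 additional_condition_18 additional_condition_19)
qed

end
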